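(* Let $A\in H_n$ and $B\in H_k$ be matrices that are neither positive semidefinite nor negative semidefinite. Then there exists a positive unital linear map $\Phi:H_n\to H_k$ with $\Phi(A)=B$ if and only if $\|A_+\|_\infty\geq\|B_+\|_\infty$ and $\|A_-\|_\infty\geq\|B_-\|_\infty$.
   Context: $H_n$ denotes the real vector space of $n\times n$ complex Hermitian matrices; $X\geq0$ means $X$ is positive semidefinite. A linear map $\Phi:H_n\to H_k$ is positive if $\Phi(X)\geq0$ for all $X\geq0$, and unital if $\Phi(\mathbb{1}_n)=\mathbb{1}_k$. Every $A\in H_n$ decomposes uniquely as $A=A_+-A_-$ with $A_+,A_-$ positive semidefinite and $A_+A_-=0$ (positive and negative parts). $\|\cdot\|_\infty$ is the operator norm (largest singular value). *)

theory Defs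
  imports "HOL-Analysis.Analysis"
begin

definition hermitian :: "complex^'n^'n \<Rightarrow> bool" where
  "hermitian X \<longleftrightarrow> (\<forall>i j. X $ i $ j = cnj (X $ j $ i))"

definition psd :: "complex^'n^'n \<Rightarrow> bool" where
  "psd X \<longleftrightarrow> hermitian X \<and>
     (\<forall>v :: complex^'n. 0 \<le> Re (\<Sum>i\<in>UNIV. cnj (v $ i) * (X *v v) $ i))"

text \<open>Positive and negative parts: the unique decomposition A = A+ - A-,
  A+, A- psd, A+ A- = 0.\<close>
definition pos_part :: "complex^'n^'n \<Rightarrow> complex^'n^'n" where
  "pos_part A = (THE P. \<exists>N. psd P \<and> psd N \<and> P ** N = 0 \<and> A = P - N)"

definition neg_part :: "complex^'n^'n \<Rightarrow> complex^'n^'n" where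
  "neg_part A = (THE N. \<exists>P. psd P \<and> psd N \<and> P ** N = 0 \<and> A = P - N)"

text \<open>Operator norm (largest singular value) w.r.t. the Euclidean norm on complex^'n.\<close>
definition opnorm :: "complex^'n^'m \<Rightarrow> real" where
  "opnorm A = onorm (\<lambda>x :: complex^'n. A *v x)"

text \<open>Positive unital real-linear map H_n \<rightarrow> H_k (only its values on H_n matter).\<close>
definition pos_unital_map :: "(complex^'n^'n \<Rightarrow> complex^'k^'k) \<Rightarrow> bool" where
  "pos_unital_map \<Phi> \<longleftrightarrow>
     (\<forall>X. hermitian X \<longrightarrow> hermitian (\<Phi> X)) \<and>
     (\<forall>X Y. hermitian X \<longrightarrow> hermitian Y \<longrightarrow> \<Phi> (X + Y) = \<Phi> X + \<Phi> Y) \<and>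
     (\<forall>X (c::real). hermitian X \<longrightarrow> \<Phi> (c *\<^sub>R X) = c *\<^sub>R \<Phi> X) \<and>
     (\<forall>X. psd X \<longrightarrow> psd (\<Phi> X)) \<and>
     \<Phi> (mat 1) = mat 1"

end

theory Submission
  imports Defs
begin

text \<open>A Hermitian \<open>A\<close> has an orthonormal eigenbasis, found by repeatedly maximising
  \<open>\<langle>v, A v\<rangle>\<close> on the unit sphere of the orthogonal complement of the eigenvectors found so far.
  In this basis \<open>A\<^sub>+\<close> and \<open>A\<^sub>-\<close> act by \<open>max \<lambda> 0\<close> and \<open>max (-\<lambda>) 0\<close>, so \<open>A\<^sub>- = (-A)\<^sub>+\<close> and
  \<open>\<parallel>A\<^sub>+\<parallel> = max \<lambda>\<^sub>m\<^sub>a\<^sub>x 0\<close> is the least \<open>a \<ge> 0\<close> with \<open>a I - A \<ge> 0\<close>. A positive unital map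
  turns \<open>a I - A \<ge> 0\<close> into \<open>a I - \<Phi> A \<ge> 0\<close>, which gives necessity. Conversely, let
  \<open>a = \<parallel>A\<^sub>+\<parallel>\<close>, \<open>b = \<parallel>A\<^sub>-\<parallel>\<close> and let \<open>u\<close>, \<open>w\<close> be unit eigenvectors of \<open>A\<close> for the eigenvalues
  \<open>a > 0\<close> and \<open>-b < 0\<close>. The measure-and-prepare map \<open>X \<mapsto> \<langle>u, X u\<rangle> C + \<langle>w, X w\<rangle> D\<close> with
  \<open>C = (b I + B) / (a + b)\<close> and \<open>D = (a I - B) / (a + b)\<close> is positive and unital, and sends \<open>A\<close>
  to \<open>a C - b D = B\<close>; positivity of \<open>C\<close> and \<open>D\<close> is exactly the hypothesis on the norms.\<close>

definition cinner :: "complex^'n \<Rightarrow> complex^'n \<Rightarrow> complex" where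
  "cinner x y = (\<Sum>i\<in>UNIV. cnj (x$i) * y$i)"

lemma cinner_add_right: "cinner x (y + z) = cinner x y + cinner x z"
  by (simp add: cinner_def distrib_left sum.distrib)

lemma cinner_add_left: "cinner (x + y) z = cinner x z + cinner y z"
  by (simp add: cinner_def distrib_right sum.distrib)

lemma cinner_diff_right: "cinner x (y - z) = cinner x y - cinner x z"
  by (simp add: cinner_def right_diff_distrib sum_subtractf)

lemma cinner_zero_right [simp]: "cinner x 0 = 0"
  by (simp add: cinner_def)

lemma cinner_scale_right: "cinner x (c *s y) = c * cinner x y"
  by (simp add: cinner_def sum_distrib_left mult_ac)

lemma cinner_scale_left: "cinner (c *s x) y = cnj c * cinner x y"
  by (simp add: cinner_def sum_distrib_left mult_ac)

lemma cinner_sum_right: "cinner x (sum f S) = (\<Sum>j\<in>S. cinner x (f j))"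
  by (simp add: cinner_def sum_distrib_left) (rule sum.swap)

lemma cinner_sum_left: "cinner (sum f S) y = (\<Sum>j\<in>S. cinner (f j) y)"
  by (simp add: cinner_def sum_distrib_right cnj_sum) (rule sum.swap)

lemma cinner_commute: "cinner y x = cnj (cinner x y)"
  by (simp add: cinner_def cnj_sum mult.commute)

lemma Re_cinner: "Re (cinner x y) = inner x y"
  by (simp add: cinner_def inner_vec_def inner_complex_def Re_sum)

lemma cinner_self: "cinner x x = complex_of_real ((norm x)^2)"
proof -
  have "Im (cinner x x) = 0" by (simp add: cinner_def Im_sum)
  moreover have "Re (cinner x x) = (norm x)^2" by (simp add: Re_cinner power2_norm_eq_inner)
  ultimately show ?thesis by (simp add: complex_eq_iff)
qed

lemma continuous_on_cinner_right: "continuous_on S (\<lambda>v. cinner a v)"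
  unfolding cinner_def by (intro continuous_intros continuous_on_component continuous_on_id)

lemma norm_vector_scale: "norm (c *s (y::'a::real_normed_field^'n)) = norm c * norm y"
  unfolding norm_vec_def by (simp add: norm_mult L2_set_right_distrib)

lemma norm_normalize: "y \<noteq> 0 \<Longrightarrow> norm ((1 / complex_of_real (norm y)) *s (y::complex^'n)) = 1"
  by (simp add: norm_vector_scale norm_divide)

lemma matrix_vector_mult_sum: "(A::'a::comm_semiring_1^'n^'m) *v (sum f S) = (\<Sum>j\<in>S. A *v f j)"
proof -
  have "(\<Sum>j\<in>UNIV. A$i$j * (\<Sum>k\<in>S. f k $ j)) = (\<Sum>k\<in>S. \<Sum>j\<in>UNIV. A$i$j * f k $ j)" for i
    by (simp add: sum_distrib_left) (rule sum.swap)
  then show ?thesis by (simp add: vec_eq_iff matrix_vector_mult_def)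
qed

lemma scaleR_matrix_vector_mult:
  "((r::real) *\<^sub>R (M::complex^'n^'m)) *v x = complex_of_real r *s (M *v x)"
  by (simp add: vec_eq_iff matrix_vector_mult_def sum_distrib_left)
    (simp add: scaleR_conv_of_real mult.assoc)

lemma hermitianD: "hermitian X \<Longrightarrow> X$i$j = cnj (X$j$i)"
  unfolding hermitian_def by blast

lemma hermitian_cinner_adjoint:
  assumes "hermitian A"
  shows "cinner x (A *v y) = cinner (A *v x) y"
proof -
  have h: "\<And>i j. cnj (A$j$i) = A$i$j" using hermitianD[OF assms] by (metis complex_cnj_cnj)
  have "cinner x (A *v y) = (\<Sum>i\<in>UNIV. \<Sum>j\<in>UNIV. cnj (x$i) * A$i$j * y$j)"
    by (simp add: cinner_def matrix_vector_mult_def sum_distrib_left mult.assoc)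
  also have "\<dots> = (\<Sum>j\<in>UNIV. \<Sum>i\<in>UNIV. cnj (x$i) * A$i$j * y$j)" by (rule sum.swap)
  also have "\<dots> = (\<Sum>j\<in>UNIV. \<Sum>i\<in>UNIV. cnj (A$j$i) * cnj (x$i) * y$j)"
    by (simp add: h mult.commute)
  also have "\<dots> = cinner (A *v x) y"
    by (simp add: cinner_def matrix_vector_mult_def sum_distrib_right)
  finally show ?thesis .
qed

lemma hermitian_add:
  assumes "hermitian X" "hermitian Y"
  shows "hermitian (X + Y)"
  unfolding hermitian_def
  using hermitianD[OF assms(1)] hermitianD[OF assms(2)] by (metis complex_cnj_add vector_add_component)

lemma hermitian_diff:
  assumes "hermitian X" "hermitian Y"
  shows "hermitian (X - Y)"
  unfolding hermitian_def
  using hermitianD[OF assms(1)] hermitianD[OF assms(2)] by (metis complex_cnj_diff vector_minus_component)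

lemma hermitian_uminus: "hermitian X \<Longrightarrow> hermitian (- X)"
  unfolding hermitian_def by (metis complex_cnj_minus vector_uminus_component)

lemma hermitian_scaleR: "hermitian X \<Longrightarrow> hermitian ((r::real) *\<^sub>R X)"
  unfolding hermitian_def by (metis complex_cnj_scaleR vector_scaleR_component)

lemma hermitian_mat_1: "hermitian (mat 1)"
  unfolding hermitian_def mat_def by simp

definition quad_form :: "complex^'n^'n \<Rightarrow> complex^'n \<Rightarrow> real" where
  "quad_form A v = Re (cinner v (A *v v))"

lemma psd_iff_quad_form: "psd A \<longleftrightarrow> hermitian A \<and> (\<forall>v. 0 \<le> quad_form A v)"
  by (simp add: psd_def quad_form_def cinner_def)

lemma quad_form_add: "quad_form (M + M') x = quad_form M x + quad_form M' x"
  by (simp add: quad_form_def matrix_vector_mult_add_rdistrib cinner_add_right)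

lemma quad_form_diff: "quad_form (M - M') x = quad_form M x - quad_form M' x"
  by (simp add: quad_form_def matrix_vector_mult_diff_rdistrib cinner_diff_right)

lemma quad_form_scaleR: "quad_form (r *\<^sub>R M) x = r * quad_form M x"
  by (simp add: quad_form_def scaleR_matrix_vector_mult cinner_scale_right)

lemma quad_form_uminus: "quad_form (- M) x = - quad_form M x"
  using quad_form_scaleR[of "-1" M x] by simp

lemma quad_form_mat_1: "quad_form (mat 1) x = (norm x)^2"
  by (simp add: quad_form_def cinner_self)

lemma quad_form_scale_vector: "quad_form A (complex_of_real r *s v) = r^2 * quad_form A v"
  by (simp add: quad_form_def vector_scalar_commute cinner_scale_left cinner_scale_right
      power2_eq_square mult.assoc)

lemma quad_form_shifted_identity: "quad_form (a *\<^sub>R mat 1 - A) x = a * (norm x)^2 - quad_form A x"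
  by (simp add: quad_form_diff quad_form_scaleR quad_form_mat_1)

lemma quad_form_add_scale:
  assumes "hermitian M"
  shows "quad_form M (x + complex_of_real t *s y)
    = quad_form M x + 2 * t * Re (cinner y (M *v x)) + t^2 * quad_form M y"
proof -
  let ?c = "complex_of_real t"
  have "cinner (x + ?c *s y) (M *v (x + ?c *s y)) = cinner x (M *v x) + ?c * cinner x (M *v y)
      + ?c * cinner y (M *v x) + ?c * ?c * cinner y (M *v y)"
    by (simp only: matrix_vector_right_distrib vector_scalar_commute cinner_add_left cinner_add_right
        cinner_scale_left cinner_scale_right complex_cnj_complex_of_real) (simp add: algebra_simps)
  moreover have "Re (cinner x (M *v y)) = Re (cinner y (M *v x))"
    using hermitian_cinner_adjoint[OF assms, of x y] cinner_commute[of "M *v x" y] by simp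
  ultimately show ?thesis by (simp add: quad_form_def power2_eq_square)
qed

lemma continuous_on_quad_form: "continuous_on S (\<lambda>v. quad_form A v)"
  unfolding quad_form_def cinner_def matrix_vector_mult_def
  by (simp add: vec_lambda_beta) (intro continuous_intros continuous_on_component continuous_on_id)

lemma psd_add: "psd X \<Longrightarrow> psd Y \<Longrightarrow> psd (X + Y)"
  by (simp add: psd_iff_quad_form hermitian_add quad_form_add)

lemma psd_scaleR: "psd X \<Longrightarrow> 0 \<le> r \<Longrightarrow> psd ((r::real) *\<^sub>R X)"
  by (simp add: psd_iff_quad_form hermitian_scaleR quad_form_scaleR)

definition orthonormal :: "nat \<Rightarrow> (nat \<Rightarrow> complex^'n) \<Rightarrow> bool" where
  "orthonormal m u \<longleftrightarrow> (\<forall>i<m. \<forall>j<m. cinner (u i) (u j) = (if i = j then 1 else 0))"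

lemma orthonormalD: "orthonormal m u \<Longrightarrow> i < m \<Longrightarrow> j < m \<Longrightarrow> cinner (u i) (u j) = (if i = j then 1 else 0)"
  unfolding orthonormal_def by blast

lemma orthonormal_extend:
  assumes "orthonormal m u" and "cinner v v = 1" and "\<forall>j<m. cinner (u j) v = 0"
  shows "orthonormal (Suc m) (u(m := v))"
  unfolding orthonormal_def
proof (intro allI impI)
  fix i j assume "i < Suc m" "j < Suc m"
  then show "cinner ((u(m := v)) i) ((u(m := v)) j) = (if i = j then 1 else 0)"
    using orthonormalD[OF assms(1), of i j] assms(2,3)
      cinner_commute[of v "u i"] cinner_commute[of v "u j"]
    by (auto simp: less_Suc_eq)
qed

lemma orthonormal_norm:
  assumes "orthonormal m u" "k < m"
  shows "norm (u k) = 1"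
proof -
  have "complex_of_real ((norm (u k))^2) = 1"
    using orthonormalD[OF assms(1,2,2)] by (simp only: cinner_self) simp
  then have "(norm (u k))^2 = 1" by (simp only: of_real_eq_1_iff)
  then show ?thesis using norm_ge_zero[of "u k"] by (auto simp: power2_eq_1_iff)
qed

text \<open>Together with the vectors \<open>\<i> u\<^sub>k\<close>, a complex orthonormal family is a real orthonormal family
  in \<open>complex^'n\<close> seen as a real Euclidean space of dimension \<open>2 * CARD('n)\<close>.\<close>

definition realified :: "nat \<Rightarrow> (nat \<Rightarrow> complex^'n) \<Rightarrow> nat \<Rightarrow> complex^'n" where
  "realified m u k = (if k < m then u k else \<i> *s u (k - m))"

lemma realified_inner:
  assumes "orthonormal m u" "a < 2*m" "b < 2*m"
  shows "inner (realified m u a) (realified m u b) = (if a = b then 1 else 0)"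
  using assms(2,3) orthonormalD[OF assms(1)]
  by (auto simp: realified_def Re_cinner[symmetric] cinner_scale_left cinner_scale_right)

lemma orthonormal_real_card_le:
  fixes g :: "nat \<Rightarrow> 'a::euclidean_space"
  assumes g: "\<And>a b. a < M \<Longrightarrow> b < M \<Longrightarrow> inner (g a) (g b) = (if a = b then 1 else 0)"
  shows "M \<le> DIM('a)"
proof -
  have inj: "inj_on g {..<M}"
  proof (rule inj_onI)
    fix a b assume "a \<in> {..<M}" "b \<in> {..<M}" "g a = g b"
    then show "a = b" using g[of a a] g[of a b] by (auto split: if_splits)
  qed
  have "pairwise orthogonal (g ` {..<M})"
    unfolding pairwise_def orthogonal_def using g by auto
  moreover have "0 \<notin> g ` {..<M}" using g by force
  ultimately have "independent (g ` {..<M})" by (rule pairwise_orthogonal_independent)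
  then have "card (g ` {..<M}) \<le> dim (UNIV::'a set)" by (intro independent_card_le_dim) auto
  then show ?thesis using card_image[OF inj] by simp
qed

lemma orthonormal_length_le:
  assumes "orthonormal m (u :: nat \<Rightarrow> complex^'n)"
  shows "m \<le> CARD('n)"
proof -
  have "2*m \<le> DIM(complex^'n)"
    by (rule orthonormal_real_card_le[of "2*m" "realified m u"]) (use realified_inner[OF assms] in auto)
  then show ?thesis by simp
qed

lemma orthonormal_complement_nonzero:
  assumes "orthonormal m (u :: nat \<Rightarrow> complex^'n)" "m < CARD('n)"
  obtains y where "y \<noteq> 0" "\<forall>j<m. cinner (u j) y = 0"
proof -
  let ?S = "realified m u ` {..<2*m}"
  have "dim ?S \<le> card ?S" by (rule dim_le_card) (auto intro: span_base)
  also have "\<dots> \<le> 2*m" using card_image_le[of "{..<2*m}" "realified m u"] by simp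
  also have "\<dots> < DIM(complex^'n)" using assms(2) by simp
  finally obtain x :: "complex^'n" where x: "x \<noteq> 0" "\<And>y. y \<in> span ?S \<Longrightarrow> orthogonal x y"
    using orthogonal_to_subspace_exists by blast
  have "cinner (u j) x = 0" if j: "j < m" for j
  proof -
    have "orthogonal x (realified m u j)" "orthogonal x (realified m u (m + j))"
      using j by (auto intro!: x(2) span_base)
    then have "Re (cinner (u j) x) = 0" "Re (cinner (\<i> *s u j) x) = 0"
      using j by (simp_all add: realified_def orthogonal_def Re_cinner inner_commute)
    then show ?thesis by (simp add: cinner_scale_left complex_eq_iff)
  qed
  then show thesis using x(1) that by blast
qed

lemma orthonormal_coefficient:
  assumes "orthonormal CARD('n) (u :: nat \<Rightarrow> complex^'n)" "j < CARD('n)"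
  shows "cinner (u j) (\<Sum>i<CARD('n). d i *s u i) = d j"
proof -
  have "cinner (u j) (\<Sum>i<CARD('n). d i *s u i) = (\<Sum>i<CARD('n). d i * (if j = i then 1 else 0))"
    by (simp add: cinner_sum_right cinner_scale_right orthonormalD[OF assms(1) assms(2)])
  also have "\<dots> = d j" using assms(2) by (simp add: if_distrib cong: if_cong)
  finally show ?thesis .
qed

text \<open>A vector orthogonal to a maximal orthonormal family would extend it beyond the dimension.\<close>

lemma orthonormal_basis_expansion:
  assumes o: "orthonormal CARD('n) (u :: nat \<Rightarrow> complex^'n)"
  shows "x = (\<Sum>i<CARD('n). cinner (u i) x *s u i)"
proof (rule ccontr)
  define y where "y = x - (\<Sum>i<CARD('n). cinner (u i) x *s u i)"
  assume "x \<noteq> (\<Sum>i<CARD('n). cinner (u i) x *s u i)"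
  then have ynz: "norm y \<noteq> 0" by (simp add: y_def)
  have orth: "cinner (u j) y = 0" if "j < CARD('n)" for j
    using orthonormal_coefficient[OF o that] by (simp add: y_def cinner_diff_right)
  define v where "v = (1 / complex_of_real (norm y)) *s y"
  have "cinner v v = 1"
    using ynz by (simp add: v_def norm_normalize cinner_self)
  moreover have "\<forall>j<CARD('n). cinner (u j) v = 0"
    by (simp add: v_def cinner_scale_right orth)
  ultimately have "orthonormal (Suc CARD('n)) (u(CARD('n) := v))"
    by (rule orthonormal_extend[OF o])
  from orthonormal_length_le[OF this] show False by simp
qed

lemma orthonormal_parseval:
  assumes "orthonormal CARD('n) (u :: nat \<Rightarrow> complex^'n)"
  shows "(norm (\<Sum>i<CARD('n). d i *s u i))^2 = (\<Sum>i<CARD('n). (cmod (d i))^2)"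
proof -
  have "complex_of_real ((norm (\<Sum>i<CARD('n). d i *s u i))^2)
     = cinner (\<Sum>i<CARD('n). d i *s u i) (\<Sum>i<CARD('n). d i *s u i)" by (rule cinner_self[symmetric])
  also have "\<dots> = (\<Sum>j<CARD('n). cnj (d j) * cinner (u j) (\<Sum>i<CARD('n). d i *s u i))"
    by (simp only: cinner_sum_left cinner_scale_left)
  also have "\<dots> = (\<Sum>j<CARD('n). complex_of_real ((cmod (d j))^2))"
    by (rule sum.cong) (simp_all add: orthonormal_coefficient[OF assms]
       complex_norm_square[symmetric] mult.commute del: of_real_power)
  finally show ?thesis by (simp only: of_real_sum[symmetric] of_real_eq_iff)
qed

lemma orthonormal_norm_square:
  assumes "orthonormal CARD('n) (u :: nat \<Rightarrow> complex^'n)"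
  shows "(norm x)^2 = (\<Sum>i<CARD('n). (cmod (cinner (u i) x))^2)"
  using orthonormal_parseval[OF assms, of "\<lambda>i. cinner (u i) x"]
    orthonormal_basis_expansion[OF assms, of x] by simp

section \<open>The spectral theorem\<close>

definition eigenbasis :: "complex^'n^'n \<Rightarrow> (nat \<Rightarrow> complex^'n) \<Rightarrow> (nat \<Rightarrow> real) \<Rightarrow> bool" where
  "eigenbasis A u l \<longleftrightarrow> orthonormal CARD('n) u \<and>
     (\<forall>j<CARD('n). A *v u j = complex_of_real (l j) *s u j)"

text \<open>The form is nonnegative on the orthogonal complement of the \<open>u j\<close>, which contains \<open>v\<close> and
  \<open>M v\<close>; if \<open>M v \<noteq> 0\<close>, moving from \<open>v\<close> to \<open>v - s M v\<close> makes it negative for small \<open>s > 0\<close>.\<close>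

lemma quad_form_zero_imp_kernel:
  fixes M :: "complex^'n^'n"
  assumes herm: "hermitian M"
    and psd_on: "\<And>z. \<forall>j<m. cinner (u j) z = 0 \<Longrightarrow> 0 \<le> quad_form M z"
    and v: "\<forall>j<m. cinner (u j) v = 0" and Mv: "\<forall>j<m. cinner (u j) (M *v v) = 0"
    and zero: "quad_form M v = 0"
  shows "M *v v = 0"
proof (rule ccontr)
  define w where "w = M *v v"
  define q where "q = quad_form M w"
  assume "M *v v \<noteq> 0"
  then have wpos: "0 < (norm w)^2" by (simp add: w_def)
  have expand: "0 \<le> - 2 * s * (norm w)^2 + s^2 * q" for s :: real
  proof -
    have "\<forall>j<m. cinner (u j) (v + complex_of_real (- s) *s w) = 0"
      using v Mv by (simp add: w_def cinner_add_right cinner_diff_right cinner_scale_right)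
    then have "0 \<le> quad_form M (v + complex_of_real (- s) *s w)" by (rule psd_on)
    then have "0 \<le> quad_form M v + 2 * (- s) * Re (cinner w (M *v v)) + (- s)^2 * quad_form M w"
      by (simp only: quad_form_add_scale[OF herm])
    then show ?thesis using zero by (simp add: q_def cinner_self flip: w_def)
  qed
  define s where "s = (norm w)^2 / (\<bar>q\<bar> + 1)"
  have s0: "0 < s" using wpos by (simp add: s_def)
  have "s * \<bar>q\<bar> < (norm w)^2"
  proof -
    have "s * \<bar>q\<bar> = (norm w)^2 * (\<bar>q\<bar> / (\<bar>q\<bar> + 1))" by (simp add: s_def)
    also have "\<dots> < (norm w)^2 * 1" by (rule mult_strict_left_mono) (use wpos in auto)
    finally show ?thesis by simp
  qed
  moreover have "2 * (norm w)^2 \<le> s * q"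
  proof -
    have "0 \<le> s * (- 2 * (norm w)^2 + s * q)"
      using expand[of s] by (simp add: power2_eq_square algebra_simps)
    then show ?thesis using s0 by (simp add: zero_le_mult_iff)
  qed
  moreover have "s * q \<le> s * \<bar>q\<bar>" using s0 by (intro mult_left_mono) auto
  ultimately show False using wpos by linarith
qed

text \<open>A maximiser of the form on the unit sphere of the orthogonal complement of
  already found eigenvectors is again an eigenvector.\<close>

lemma eigenvector_in_complement:
  fixes A :: "complex^'n^'n"
  assumes herm: "hermitian A" and o: "orthonormal m u"
    and ev: "\<forall>j<m. A *v u j = complex_of_real (l j) *s u j" and m: "m < CARD('n)"
  obtains v \<mu> where "orthonormal (Suc m) (u(m := v))" "A *v v = complex_of_real \<mu> *s v"
proof -
  define K where "K = {v::complex^'n. norm v = 1 \<and> (\<forall>j<m. cinner (u j) v = 0)}"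
  have "K = {v. norm v = 1} \<inter> (\<Inter>j\<in>{..<m}. {v. cinner (u j) v = 0})"
    by (auto simp: K_def)
  then have "closed K"
    by (auto intro!: closed_Int closed_INT closed_Collect_eq continuous_intros
        continuous_on_cinner_right)
  moreover have "bounded K" unfolding K_def bounded_iff by auto
  ultimately have "compact K" by (simp add: compact_eq_bounded_closed)
  moreover have "K \<noteq> {}"
  proof -
    obtain y where "y \<noteq> 0" "\<forall>j<m. cinner (u j) y = 0"
      using orthonormal_complement_nonzero[OF o m] .
    then have "(1 / complex_of_real (norm y)) *s y \<in> K"
      by (auto simp: K_def cinner_scale_right norm_normalize)
    then show ?thesis by blast
  qed
  ultimately obtain v where vK: "v \<in> K" and vmax: "\<And>z. z \<in> K \<Longrightarrow> quad_form A z \<le> quad_form A v"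
    using continuous_attains_sup[of K "quad_form A"] continuous_on_quad_form by blast
  define \<mu> where "\<mu> = quad_form A v"
  define M where "M = \<mu> *\<^sub>R mat 1 - A"
  have Mz: "M *v z = complex_of_real \<mu> *s z - A *v z" for z
    by (simp add: M_def matrix_vector_mult_diff_rdistrib scaleR_matrix_vector_mult)
  have psd_on: "0 \<le> quad_form M z" if z: "\<forall>j<m. cinner (u j) z = 0" for z
  proof (cases "z = 0")
    case True then show ?thesis by (simp add: quad_form_def)
  next
    case False
    then have zK: "(1 / complex_of_real (norm z)) *s z \<in> K"
      using z by (auto simp: K_def cinner_scale_right norm_normalize)
    have "(1 / norm z)^2 * quad_form A z \<le> \<mu>"
      using vmax[OF zK] quad_form_scale_vector[of A "1 / norm z" z] by (simp add: \<mu>_def)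
    then show ?thesis using False by (simp add: M_def quad_form_shifted_identity field_simps)
  qed
  have v1: "norm v = 1" and vo: "\<forall>j<m. cinner (u j) v = 0" using vK by (auto simp: K_def)
  have "\<forall>j<m. cinner (u j) (M *v v) = 0"
  proof (intro allI impI)
    fix j assume j: "j < m"
    have "cinner (u j) (A *v v) = cinner (A *v u j) v" by (rule hermitian_cinner_adjoint[OF herm])
    then show "cinner (u j) (M *v v) = 0"
      using ev vo j by (simp add: Mz cinner_diff_right cinner_scale_right cinner_scale_left)
  qed
  moreover have "quad_form M v = 0"
    using v1 by (simp add: M_def quad_form_shifted_identity \<mu>_def)
  ultimately have "M *v v = 0"
    using quad_form_zero_imp_kernel[OF _ psd_on vo] herm
    by (simp add: M_def hermitian_diff hermitian_scaleR hermitian_mat_1)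
  then have "A *v v = complex_of_real \<mu> *s v" by (simp add: Mz)
  moreover have "orthonormal (Suc m) (u(m := v))"
    using orthonormal_extend[OF o _ vo] v1 by (simp add: cinner_self)
  ultimately show thesis using that by blast
qed

lemma hermitian_eigenbasis:
  fixes A :: "complex^'n^'n"
  assumes "hermitian A"
  obtains u l where "eigenbasis A u l"
proof -
  have "m \<le> CARD('n) \<Longrightarrow> \<exists>u l. orthonormal m u \<and> (\<forall>j<m. A *v u j = complex_of_real (l j) *s u j)"
    for m
  proof (induction m)
    case 0 then show ?case by (auto simp: orthonormal_def)
  next
    case (Suc m)
    then obtain u l where o: "orthonormal m u" and ev: "\<forall>j<m. A *v u j = complex_of_real (l j) *s u j"
      by auto
    have "m < CARD('n)" using Suc.prems by simp
    then obtain v \<mu> where "orthonormal (Suc m) (u(m := v))" and "A *v v = complex_of_real \<mu> *s v"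
      by (rule eigenvector_in_complement[OF assms o ev])
    moreover have "\<forall>j<Suc m. A *v (u(m := v)) j = complex_of_real ((l(m := \<mu>)) j) *s (u(m := v)) j"
      using ev calculation(2) by (auto simp: less_Suc_eq)
    ultimately show ?case by blast
  qed
  then show thesis using that unfolding eigenbasis_def by blast
qed

definition spectral_sum :: "(nat \<Rightarrow> complex^'n) \<Rightarrow> (nat \<Rightarrow> real) \<Rightarrow> complex^'n^'n" where
  "spectral_sum u f = (\<chi> a b. \<Sum>i<CARD('n). complex_of_real (f i) * (u i)$a * cnj ((u i)$b))"

lemma spectral_sum_mult_vector:
  fixes u :: "nat \<Rightarrow> complex^'n"
  shows "spectral_sum u f *v x = (\<Sum>i<CARD('n). (complex_of_real (f i) * cinner (u i) x) *s u i)"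
proof -
  have "(\<Sum>b\<in>UNIV. (\<Sum>i<CARD('n). complex_of_real (f i) * (u i)$a * cnj ((u i)$b)) * x$b)
      = (\<Sum>i<CARD('n). complex_of_real (f i) * (\<Sum>b\<in>UNIV. cnj ((u i)$b) * x$b) * (u i)$a)" for a
    by (simp add: sum_distrib_left sum_distrib_right mult_ac) (rule sum.swap)
  then show ?thesis
    by (simp add: vec_eq_iff matrix_vector_mult_def spectral_sum_def cinner_def)
qed

lemma hermitian_spectral_sum: "hermitian (spectral_sum u f)"
  unfolding hermitian_def spectral_sum_def by (simp add: mult_ac)

lemma spectral_sum_zero: "spectral_sum u (\<lambda>i. 0) = 0"
  by (simp add: spectral_sum_def vec_eq_iff)

lemma spectral_sum_diff: "spectral_sum u f - spectral_sum u g = spectral_sum u (\<lambda>i. f i - g i)"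
  by (simp add: spectral_sum_def vec_eq_iff sum_subtractf algebra_simps)

lemma cinner_spectral_sum:
  assumes "orthonormal CARD('n) (u :: nat \<Rightarrow> complex^'n)" "j < CARD('n)"
  shows "cinner (u j) (spectral_sum u f *v x) = complex_of_real (f j) * cinner (u j) x"
  unfolding spectral_sum_mult_vector by (rule orthonormal_coefficient[OF assms])

lemma spectral_sum_eigenvector:
  assumes "orthonormal CARD('n) (u :: nat \<Rightarrow> complex^'n)" "k < CARD('n)"
  shows "spectral_sum u f *v u k = complex_of_real (f k) *s u k"
proof -
  have "spectral_sum u f *v u k = (\<Sum>i<CARD('n). if i = k then complex_of_real (f k) *s u k else 0)"
    unfolding spectral_sum_mult_vector
    by (rule sum.cong) (use orthonormalD[OF assms(1) _ assms(2)] in auto)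
  then show ?thesis using assms(2) by simp
qed

lemma spectral_sum_mult:
  assumes "orthonormal CARD('n) (u :: nat \<Rightarrow> complex^'n)"
  shows "spectral_sum u f ** spectral_sum u g = spectral_sum u (\<lambda>i. f i * g i)"
proof -
  have "spectral_sum u f *v (spectral_sum u g *v x) = spectral_sum u (\<lambda>i. f i * g i) *v x" for x
    unfolding spectral_sum_mult_vector[of u f] spectral_sum_mult_vector[of u "\<lambda>i. f i * g i"]
    by (rule sum.cong) (simp_all add: cinner_spectral_sum[OF assms] mult.assoc)
  then show ?thesis by (simp add: matrix_eq matrix_vector_mul_assoc)
qed

lemma quad_form_spectral_sum:
  assumes "orthonormal CARD('n) (u :: nat \<Rightarrow> complex^'n)"
  shows "quad_form (spectral_sum u f) x = (\<Sum>i<CARD('n). f i * (cmod (cinner (u i) x))^2)"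
proof -
  have "cinner x (spectral_sum u f *v x)
      = (\<Sum>i<CARD('n). complex_of_real (f i) * cinner (u i) x * cinner x (u i))"
    by (simp add: spectral_sum_mult_vector cinner_sum_right cinner_scale_right)
  also have "\<dots> = (\<Sum>i<CARD('n). complex_of_real (f i * (cmod (cinner (u i) x))^2))"
    by (rule sum.cong) (simp_all add: cinner_commute[of x] complex_norm_square[symmetric] mult_ac
       del: of_real_power)
  finally show ?thesis by (simp add: quad_form_def Re_sum)
qed

lemma eigenbasis_spectral_sum:
  fixes A :: "complex^'n^'n"
  assumes "eigenbasis A u l"
  shows "A = spectral_sum u l"
proof -
  have o: "orthonormal CARD('n) u" and ev: "\<And>j. j < CARD('n) \<Longrightarrow> A *v u j = complex_of_real (l j) *s u j"
    using assms by (auto simp: eigenbasis_def)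
  have "A *v x = spectral_sum u l *v x" for x
  proof -
    have "A *v x = A *v (\<Sum>i<CARD('n). cinner (u i) x *s u i)"
      using orthonormal_basis_expansion[OF o, of x] by simp
    also have "\<dots> = (\<Sum>i<CARD('n). (complex_of_real (l i) * cinner (u i) x) *s u i)"
      by (simp add: matrix_vector_mult_sum vector_scalar_commute ev vector_smult_assoc mult.commute)
    finally show ?thesis by (simp add: spectral_sum_mult_vector)
  qed
  then show ?thesis by (simp add: matrix_eq)
qed

lemma quad_form_le_eigenvalue_bound:
  fixes A :: "complex^'n^'n"
  assumes "eigenbasis A u l" and "\<And>i. i < CARD('n) \<Longrightarrow> l i \<le> c"
  shows "quad_form A x \<le> c * (norm x)^2"
proof -
  have o: "orthonormal CARD('n) u" using assms(1) by (simp add: eigenbasis_def)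
  have "quad_form A x = (\<Sum>i<CARD('n). l i * (cmod (cinner (u i) x))^2)"
    using eigenbasis_spectral_sum[OF assms(1)] quad_form_spectral_sum[OF o] by simp
  also have "\<dots> \<le> (\<Sum>i<CARD('n). c * (cmod (cinner (u i) x))^2)"
    by (rule sum_mono) (simp add: assms(2) mult_right_mono)
  also have "\<dots> = c * (norm x)^2" by (simp add: orthonormal_norm_square[OF o] sum_distrib_left)
  finally show ?thesis .
qed

lemma opnorm_spectral_sum:
  assumes o: "orthonormal CARD('n) (u :: nat \<Rightarrow> complex^'n)"
    and f: "\<And>i. i < CARD('n) \<Longrightarrow> 0 \<le> f i \<and> f i \<le> f k" and k: "k < CARD('n)"
  shows "opnorm (spectral_sum u f) = f k"
proof (rule antisym)
  show "opnorm (spectral_sum u f) \<le> f k"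
    unfolding opnorm_def
  proof (rule onorm_le)
    fix x :: "complex^'n"
    have "(norm (spectral_sum u f *v x))^2 = (\<Sum>i<CARD('n). (f i)^2 * (cmod (cinner (u i) x))^2)"
      unfolding spectral_sum_mult_vector orthonormal_parseval[OF o]
      by (simp add: norm_mult power_mult_distrib)
    also have "\<dots> \<le> (\<Sum>i<CARD('n). (f k)^2 * (cmod (cinner (u i) x))^2)"
      by (rule sum_mono) (intro mult_right_mono power_mono, auto dest: f)
    also have "\<dots> = (f k * norm x)^2"
      by (simp add: orthonormal_norm_square[OF o] sum_distrib_left power_mult_distrib)
    finally show "norm (spectral_sum u f *v x) \<le> f k * norm x"
      by (rule power2_le_imp_le) (use f[OF k] in simp)
  qed
  have "bounded_linear (\<lambda>x. spectral_sum u f *v x)"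
    using linear_conv_bounded_linear matrix_vector_mul_linear by blast
  then have "norm (spectral_sum u f *v u k) / norm (u k) \<le> opnorm (spectral_sum u f)"
    unfolding opnorm_def by (rule le_onorm)
  then show "f k \<le> opnorm (spectral_sum u f)"
    using f[OF k]
    by (simp add: spectral_sum_eigenvector[OF o k] norm_vector_scale orthonormal_norm[OF o k])
qed

section \<open>Positive and negative parts\<close>

text \<open>In a decomposition \<open>A = P - N\<close> with \<open>P, N \<ge> 0\<close> and \<open>P N = 0\<close>, also \<open>N P = 0\<close>, so
  \<open>P\<close> and \<open>N\<close> act on an eigenvector of \<open>A\<close> with eigenvalue \<open>c\<close> as \<open>max c 0\<close> and \<open>max (-c) 0\<close>.\<close>

lemma psd_decomposition_eigenvector:
  fixes A P N :: "complex^'n^'n"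
  assumes P: "psd P" and N: "psd N" and PN: "P ** N = 0" and A: "A = P - N"
    and v: "A *v v = complex_of_real c *s v"
  shows "P *v v = complex_of_real (max c 0) *s v"
proof -
  have hP: "hermitian P" and hN: "hermitian N" using P N by (auto simp: psd_iff_quad_form)
  have PN0: "P *v (N *v y) = 0" for y using PN by (simp add: matrix_vector_mul_assoc)
  have NP0: "N *v (P *v y) = 0" for y
  proof -
    define z where "z = N *v (P *v y)"
    have "cinner z z = cinner (P *v y) (N *v z)"
      unfolding z_def by (rule hermitian_cinner_adjoint[OF hN, symmetric])
    also have "\<dots> = cinner y (P *v (N *v z))" by (rule hermitian_cinner_adjoint[OF hP, symmetric])
    finally show ?thesis by (simp add: PN0 cinner_self z_def)
  qed
  have Av: "P *v v - N *v v = complex_of_real c *s v"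
    using v A by (simp add: matrix_vector_mult_diff_rdistrib)
  have norm_square: "(norm (M *v v))^2 = d * quad_form M v"
    if "hermitian M" and "M *v (M *v v) = complex_of_real d *s (M *v v)" for M d
  proof -
    have "complex_of_real ((norm (M *v v))^2) = cinner (M *v v) (M *v v)"
      by (rule cinner_self[symmetric])
    also have "\<dots> = cinner v (M *v (M *v v))"
      by (rule hermitian_cinner_adjoint[OF that(1), symmetric])
    also have "\<dots> = complex_of_real d * cinner v (M *v v)"
      by (simp add: that(2) cinner_scale_right)
    finally have "(norm (M *v v))^2 = Re (complex_of_real d * cinner v (M *v v))"
      by (metis Re_complex_of_real)
    then show ?thesis by (simp add: quad_form_def)
  qed
  show ?thesis
  proof (cases "c > 0")
    case True
    have Nv: "N *v v = P *v v - complex_of_real c *s v" using Av by (simp add: algebra_simps)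
    have "N *v (N *v v) = complex_of_real (- c) *s (N *v v)"
      by (simp add: Nv matrix_vector_mult_diff_distrib vector_scalar_commute NP0)
    then have "(norm (N *v v))^2 = - c * quad_form N v" by (rule norm_square[OF hN])
    moreover have "0 \<le> c * quad_form N v" using True N by (simp add: psd_iff_quad_form)
    ultimately have "(norm (N *v v))^2 \<le> 0" by simp
    then have "N *v v = 0" by simp
    then show ?thesis using Av True by simp
  next
    case False
    have Pv: "P *v v = complex_of_real c *s v + N *v v" using Av by (simp add: algebra_simps)
    have "P *v (P *v v) = complex_of_real c *s (P *v v)"
      by (simp add: Pv matrix_vector_right_distrib vector_scalar_commute PN0)
    then have "(norm (P *v v))^2 = c * quad_form P v" by (rule norm_square[OF hP])
    moreover have "c * quad_form P v \<le> 0"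
      using False P by (simp add: psd_iff_quad_form mult_nonpos_nonneg)
    ultimately have "(norm (P *v v))^2 \<le> 0" by simp
    then have "P *v v = 0" by simp
    then show ?thesis using False by simp
  qed
qed

lemma psd_decomposition_positive_part:
  fixes A P N :: "complex^'n^'n"
  assumes "eigenbasis A u l" and "psd P" "psd N" "P ** N = 0" "A = P - N"
  shows "P = spectral_sum u (\<lambda>i. max (l i) 0)"
proof -
  have o: "orthonormal CARD('n) u" and ev: "\<And>j. j < CARD('n) \<Longrightarrow> A *v u j = complex_of_real (l j) *s u j"
    using assms(1) by (auto simp: eigenbasis_def)
  have "P *v x = spectral_sum u (\<lambda>i. max (l i) 0) *v x" for x
  proof -
    have "P *v x = P *v (\<Sum>i<CARD('n). cinner (u i) x *s u i)"
      using orthonormal_basis_expansion[OF o, of x] by simp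
    also have "\<dots> = (\<Sum>i<CARD('n). (complex_of_real (max (l i) 0) * cinner (u i) x) *s u i)"
      unfolding matrix_vector_mult_sum vector_scalar_commute
      by (rule sum.cong) (simp_all add: psd_decomposition_eigenvector[OF assms(2-5) ev]
          vector_smult_assoc mult.commute)
    finally show ?thesis by (simp add: spectral_sum_mult_vector)
  qed
  then show ?thesis by (simp add: matrix_eq)
qed

lemma eigenbasis_psd_decomposition:
  fixes A :: "complex^'n^'n"
  assumes "eigenbasis A u l"
  defines "P \<equiv> spectral_sum u (\<lambda>i. max (l i) 0)" and "N \<equiv> spectral_sum u (\<lambda>i. max (- l i) 0)"
  shows "psd P \<and> psd N \<and> P ** N = 0 \<and> A = P - N"
proof (intro conjI)
  have o: "orthonormal CARD('n) u" using assms by (simp add: eigenbasis_def)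
  show "psd P" "psd N"
    by (simp_all add: P_def N_def psd_iff_quad_form hermitian_spectral_sum
        quad_form_spectral_sum[OF o] sum_nonneg)
  have "(\<lambda>i. max (l i) 0 * max (- l i) 0) = (\<lambda>i. 0)" by (auto simp: max_def)
  then show "P ** N = 0" by (simp add: P_def N_def spectral_sum_mult[OF o] spectral_sum_zero)
  have "(\<lambda>i. max (l i) 0 - max (- l i) 0) = l" by (auto simp: max_def)
  then show "A = P - N" by (simp add: P_def N_def spectral_sum_diff eigenbasis_spectral_sum[OF assms(1)])
qed

lemma pos_part_eigenbasis:
  assumes "eigenbasis A u l"
  shows "pos_part A = spectral_sum u (\<lambda>i. max (l i) 0)"
  unfolding pos_part_def
  using eigenbasis_psd_decomposition[OF assms] psd_decomposition_positive_part[OF assms]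
  by (intro the_equality) blast+

lemma neg_part_eigenbasis:
  assumes "eigenbasis A u l"
  shows "neg_part A = spectral_sum u (\<lambda>i. max (- l i) 0)"
  unfolding neg_part_def
proof (rule the_equality)
  fix N assume "\<exists>P. psd P \<and> psd N \<and> P ** N = 0 \<and> A = P - N"
  then obtain P where "psd P" "psd N" "P ** N = 0" and A: "A = P - N" by blast
  then have "N = spectral_sum u (\<lambda>i. max (l i) 0) - spectral_sum u l"
    using psd_decomposition_positive_part[OF assms] eigenbasis_spectral_sum[OF assms] by simp
  also have "\<dots> = spectral_sum u (\<lambda>i. max (- l i) 0)"
    unfolding spectral_sum_diff by (rule arg_cong[where f = "spectral_sum u"]) (auto simp: max_def)
  finally show "N = spectral_sum u (\<lambda>i. max (- l i) 0)" .
qed (use eigenbasis_psd_decomposition[OF assms] in blast)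

lemma eigenbasis_uminus: "eigenbasis A u l \<Longrightarrow> eigenbasis (- A) u (\<lambda>i. - l i)"
  using scaleR_matrix_vector_mult[of "-1" A] by (simp add: eigenbasis_def)

lemma neg_part_eq_pos_part_uminus:
  assumes "hermitian A"
  shows "neg_part A = pos_part (- A)"
proof -
  obtain u l where "eigenbasis A u l" using hermitian_eigenbasis[OF assms] .
  then show ?thesis
    by (simp add: neg_part_eigenbasis pos_part_eigenbasis[OF eigenbasis_uminus])
qed

lemma opnorm_nonneg: "0 \<le> opnorm (M :: complex^'n^'m)"
  unfolding opnorm_def
  by (rule onorm_pos_le) (use linear_conv_bounded_linear matrix_vector_mul_linear in blast)

lemma opnorm_pos_part_top_eigenvalue:
  fixes A :: "complex^'n^'n"
  assumes "hermitian A"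
  obtains u where "norm u = 1" "\<forall>x. quad_form A x \<le> quad_form A u * (norm x)^2"
    "opnorm (pos_part A) = max (quad_form A u) 0"
proof -
  obtain u l where ul: "eigenbasis A u l" using hermitian_eigenbasis[OF assms] .
  have o: "orthonormal CARD('n) u" and ev: "\<And>j. j < CARD('n) \<Longrightarrow> A *v u j = complex_of_real (l j) *s u j"
    using ul by (auto simp: eigenbasis_def)
  have "{..<CARD('n)} \<noteq> {}" by (simp add: lessThan_empty_iff)
  then have "Max (l ` {..<CARD('n)}) \<in> l ` {..<CARD('n)}" using Max_in[of "l ` {..<CARD('n)}"] by auto
  then obtain k where k: "k < CARD('n)" and lk: "l k = Max (l ` {..<CARD('n)})" by auto
  have top: "l i \<le> l k" if "i < CARD('n)" for i
    unfolding lk by (rule Max_ge) (use that in auto)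
  have uk: "norm (u k) = 1" and "quad_form A (u k) = l k"
    using orthonormal_norm[OF o k] ev[OF k] by (simp_all add: quad_form_def cinner_scale_right cinner_self)
  moreover have "\<forall>x. quad_form A x \<le> l k * (norm x)^2"
    using quad_form_le_eigenvalue_bound[OF ul top] by blast
  moreover have "opnorm (pos_part A) = max (l k) 0"
    unfolding pos_part_eigenbasis[OF ul]
    by (rule opnorm_spectral_sum[OF o _ k, where f = "\<lambda>i. max (l i) 0"]) (auto dest: top)
  ultimately show thesis using that by simp
qed

lemma psd_shifted_identity_iff:
  fixes A :: "complex^'n^'n"
  assumes "hermitian A" and "0 \<le> a"
  shows "psd (a *\<^sub>R mat 1 - A) \<longleftrightarrow> opnorm (pos_part A) \<le> a"
proof -
  obtain u where u: "norm u = 1" and top: "\<forall>x. quad_form A x \<le> quad_form A u * (norm x)^2"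
    and norm_eq: "opnorm (pos_part A) = max (quad_form A u) 0"
    by (rule opnorm_pos_part_top_eigenvalue[OF assms(1)])
  have herm: "hermitian (a *\<^sub>R mat 1 - A)"
    by (intro hermitian_diff hermitian_scaleR hermitian_mat_1 assms(1))
  show ?thesis
  proof
    assume "psd (a *\<^sub>R mat 1 - A)"
    then have "0 \<le> quad_form (a *\<^sub>R mat 1 - A) u" by (simp add: psd_iff_quad_form)
    then show "opnorm (pos_part A) \<le> a"
      using u assms(2) by (simp add: norm_eq quad_form_shifted_identity)
  next
    assume "opnorm (pos_part A) \<le> a"
    then have "quad_form A u \<le> a" by (simp add: norm_eq)
    then have "0 \<le> quad_form (a *\<^sub>R mat 1 - A) x" for x
      using top[rule_format, of x] mult_right_mono[of "quad_form A u" a "(norm x)^2"]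
      by (simp add: quad_form_shifted_identity)
    then show "psd (a *\<^sub>R mat 1 - A)" by (simp add: psd_iff_quad_form herm)
  qed
qed

lemma opnorm_pos_part_attained:
  fixes A :: "complex^'n^'n"
  assumes "hermitian A" and "\<not> psd (- A)"
  obtains u where "norm u = 1" "quad_form A u = opnorm (pos_part A)" "0 < opnorm (pos_part A)"
proof -
  obtain u where u: "norm u = 1" and top: "\<forall>x. quad_form A x \<le> quad_form A u * (norm x)^2"
    and norm_eq: "opnorm (pos_part A) = max (quad_form A u) 0"
    by (rule opnorm_pos_part_top_eigenvalue[OF assms(1)])
  have "0 < quad_form A u"
  proof (rule ccontr)
    assume "\<not> 0 < quad_form A u"
    then have "0 \<le> quad_form (- A) x" for x
      using top[rule_format, of x] mult_right_mono[of "quad_form A u" 0 "(norm x)^2"]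
      by (simp add: quad_form_uminus)
    then have "psd (- A)" using assms(1) by (simp add: psd_iff_quad_form hermitian_uminus)
    with assms(2) show False ..
  qed
  then show thesis using that u norm_eq by simp
qed

section \<open>Positive unital maps\<close>

lemma pos_unital_map_affine:
  assumes "pos_unital_map \<Phi>" and "hermitian A"
  shows "\<Phi> (a *\<^sub>R mat 1 - A) = a *\<^sub>R mat 1 - \<Phi> A"
proof -
  have add: "\<And>X Y. hermitian X \<Longrightarrow> hermitian Y \<Longrightarrow> \<Phi> (X + Y) = \<Phi> X + \<Phi> Y"
    and scal: "\<And>X c. hermitian X \<Longrightarrow> \<Phi> (c *\<^sub>R X) = c *\<^sub>R \<Phi> X"
    and unit: "\<Phi> (mat 1) = mat 1"
    using assms(1) unfolding pos_unital_map_def by blast+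
  have "a *\<^sub>R mat 1 - A = a *\<^sub>R mat 1 + (-1) *\<^sub>R A" by simp
  then have "\<Phi> (a *\<^sub>R mat 1 - A) = a *\<^sub>R \<Phi> (mat 1) + (-1) *\<^sub>R \<Phi> A"
    by (metis add scal hermitian_scaleR hermitian_mat_1 assms(2))
  then show ?thesis using unit by simp
qed

lemma pos_unital_map_uminus:
  assumes "pos_unital_map \<Phi>" and "hermitian A"
  shows "\<Phi> (- A) = - \<Phi> A"
  using assms pos_unital_map_affine[OF assms, of 0] by simp

lemma opnorm_pos_part_pos_unital_map_le:
  assumes \<Phi>: "pos_unital_map \<Phi>" and A: "hermitian A"
  shows "opnorm (pos_part (\<Phi> A)) \<le> opnorm (pos_part A)"
proof -
  let ?a = "opnorm (pos_part A)"
  have "psd (?a *\<^sub>R mat 1 - A)" using psd_shifted_identity_iff[OF A opnorm_nonneg[of "pos_part A"]] by simp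
  then have "psd (?a *\<^sub>R mat 1 - \<Phi> A)"
    using \<Phi> pos_unital_map_affine[OF \<Phi> A] unfolding pos_unital_map_def by metis
  moreover have "hermitian (\<Phi> A)" using \<Phi> A unfolding pos_unital_map_def by blast
  ultimately show ?thesis using psd_shifted_identity_iff[OF _ opnorm_nonneg] by blast
qed

lemma pos_unital_map_measure_prepare:
  fixes u w :: "complex^'n"
  assumes "norm u = 1" "norm w = 1" "psd C" "psd D" "C + D = mat 1"
  shows "pos_unital_map (\<lambda>X. quad_form X u *\<^sub>R C + quad_form X w *\<^sub>R D)"
  unfolding pos_unital_map_def
proof (intro conjI allI impI)
  have "hermitian C" "hermitian D" using assms(3,4) by (simp_all add: psd_iff_quad_form)
  then show "hermitian (quad_form X u *\<^sub>R C + quad_form X w *\<^sub>R D)" for X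
    by (intro hermitian_add hermitian_scaleR)
  show "quad_form (mat 1) u *\<^sub>R C + quad_form (mat 1) w *\<^sub>R D = mat 1"
    using assms(1,2,5) by (simp add: quad_form_mat_1)
  fix X :: "complex^'n^'n"
  show "psd (quad_form X u *\<^sub>R C + quad_form X w *\<^sub>R D)" if "psd X"
    using that assms(3,4) by (intro psd_add psd_scaleR) (auto simp: psd_iff_quad_form)
  show "quad_form (c *\<^sub>R X) u *\<^sub>R C + quad_form (c *\<^sub>R X) w *\<^sub>R D
      = c *\<^sub>R (quad_form X u *\<^sub>R C + quad_form X w *\<^sub>R D)" for c
    by (simp add: quad_form_scaleR scaleR_add_right)
  show "quad_form (X + Y) u *\<^sub>R C + quad_form (X + Y) w *\<^sub>R D
      = quad_form X u *\<^sub>R C + quad_form X w *\<^sub>R D + (quad_form Y u *\<^sub>R C + quad_form Y w *\<^sub>R D)"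
    for Y by (simp add: quad_form_add scaleR_add_left)
qed

lemma pos_unital_map_exists:
  fixes A :: "complex^'n^'n" and B :: "complex^'k^'k"
  assumes "norm u = 1" "norm w = 1" "quad_form A u = a" "quad_form A w = - b" "0 < a + b"
    and "psd (a *\<^sub>R mat 1 - B)" "psd (b *\<^sub>R mat 1 + B)"
  shows "\<exists>\<Phi> :: complex^'n^'n \<Rightarrow> complex^'k^'k. pos_unital_map \<Phi> \<and> \<Phi> A = B"
proof -
  define C where "C = (1 / (a + b)) *\<^sub>R (b *\<^sub>R mat 1 + B)"
  define D where "D = (1 / (a + b)) *\<^sub>R (a *\<^sub>R mat 1 - B)"
  have "(b *\<^sub>R mat 1 + B) + (a *\<^sub>R mat 1 - B) = (a + b) *\<^sub>R mat 1"
    by (simp add: algebra_simps)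
  then have CD: "C + D = mat 1" using assms(5) by (simp add: C_def D_def flip: scaleR_add_right)
  have "a *\<^sub>R (b *\<^sub>R mat 1 + B) - b *\<^sub>R (a *\<^sub>R mat 1 - B) = (a + b) *\<^sub>R B"
    by (simp add: algebra_simps)
  then have "(1 / (a + b)) *\<^sub>R (a *\<^sub>R (b *\<^sub>R mat 1 + B) - b *\<^sub>R (a *\<^sub>R mat 1 - B)) = B"
    using assms(5) by simp
  then have AB: "a *\<^sub>R C - b *\<^sub>R D = B" by (simp add: C_def D_def scaleR_diff_right)
  have "psd C" "psd D" using assms(5-7) by (simp_all add: C_def D_def psd_scaleR)
  with CD AB show ?thesis
    using pos_unital_map_measure_prepare[OF assms(1,2)] assms(3,4) by force
qed

theorem theorem2:
  fixes A :: "complex^'n^'n" and B :: "complex^'k^'k"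
  assumes "hermitian A" and "hermitian B"
    and "\<not> psd A" and "\<not> psd (- A)"
    and "\<not> psd B" and "\<not> psd (- B)"
  shows "(\<exists>\<Phi> :: complex^'n^'n \<Rightarrow> complex^'k^'k. pos_unital_map \<Phi> \<and> \<Phi> A = B) \<longleftrightarrow>
         (opnorm (pos_part A) \<ge> opnorm (pos_part B) \<and> opnorm (neg_part A) \<ge> opnorm (neg_part B))"
proof -
  note neg_parts = neg_part_eq_pos_part_uminus[OF assms(1)] neg_part_eq_pos_part_uminus[OF assms(2)]
  show ?thesis
    unfolding neg_parts
  proof
    assume "\<exists>\<Phi> :: complex^'n^'n \<Rightarrow> complex^'k^'k. pos_unital_map \<Phi> \<and> \<Phi> A = B"
    then obtain \<Phi> :: "complex^'n^'n \<Rightarrow> complex^'k^'k" where \<Phi>: "pos_unital_map \<Phi>" and "\<Phi> A = B"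
      by blast
    then show "opnorm (pos_part B) \<le> opnorm (pos_part A) \<and> opnorm (pos_part (- B)) \<le> opnorm (pos_part (- A))"
      using opnorm_pos_part_pos_unital_map_le[OF \<Phi>] pos_unital_map_uminus[OF \<Phi> assms(1)]
        assms(1) hermitian_uminus by metis
  next
    assume le: "opnorm (pos_part B) \<le> opnorm (pos_part A) \<and> opnorm (pos_part (- B)) \<le> opnorm (pos_part (- A))"
    obtain u where "norm u = 1" "quad_form A u = opnorm (pos_part A)" "0 < opnorm (pos_part A)"
      using opnorm_pos_part_attained[OF assms(1,4)] .
    moreover obtain w where "norm w = 1" "quad_form A w = - opnorm (pos_part (- A))"
      using opnorm_pos_part_attained[OF hermitian_uminus[OF assms(1)]] assms(3)
      by (metis minus_minus quad_form_uminus)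
    moreover have "psd (opnorm (pos_part A) *\<^sub>R mat 1 - B)"
      "psd (opnorm (pos_part (- A)) *\<^sub>R mat 1 - (- B))"
      using le psd_shifted_identity_iff opnorm_nonneg assms(2) hermitian_uminus by blast+
    ultimately show "\<exists>\<Phi> :: complex^'n^'n \<Rightarrow> complex^'k^'k. pos_unital_map \<Phi> \<and> \<Phi> A = B"
      using opnorm_nonneg[of "pos_part (- A)"]
      by (intro pos_unital_map_exists[where u = u and w = w]) auto
  qed
qed

end
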